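(* Consider the online instance reservation problem described in the context, with parameters $p>0$, $\alpha\in[0,1)$, $\tau\ge 1$, and let $\beta = 1/(1-\alpha)$. Fix an arbitrary demand sequence $d_1,\dots,d_T$. Let $n_\beta$ be the total number of instances reserved by the deterministic online algorithm $A_\beta$, and let $n_{\mathrm{OPT}}$ be the total number of instances reserved, $\sum_t r^*_t$, by an optimal offline solution $(o^*_t, r^*_t)$ of the problem for this demand sequence. Then $n_\beta \le n_{\mathrm{OPT}}$.
   Context: Instance reservation problem: time is slotted $t=1,2,\dots,T$. At each time $t$ a demand $d_t\in\{0,1,2,\dots\}$ (number of instances needed) arrives; set $d_t=0$ for $t\le 0$. A user chooses integers $o_t\ge 0$ (on-demand instances used at $t$) and $r_t\ge 0$ (instances newly reserved at $t$; $r_t=0$ for $t\le 0$), subject to $o_t+\sum_{i=t-\tau+1}^{t} r_i\ge d_t$ for all $t$, where $\tau$ is the reservation period. The reservation fee is normalized to $1$, the on-demand hourly rate is $p$ (the paper assumes throughout $p\ll 1$), and reserved instances run at discounted rate $\alpha p$ with $\alpha\in[0,1]$. The total cost is $C=\sum_{t=1}^T\big(o_t p + r_t + \alpha p(d_t-o_t)\big)$. The optimal offline solution (OPT) minimizes $C$ knowing the whole sequence $d_1,\dots,d_T$ in advance; an online algorithm chooses $o_t,r_t$ knowing only $d_1,\dots,d_t$. Algorithm $A_z$ (for a threshold $z\ge 0$): maintain integers $x_i$ for all integers $i$, initially $x_i=0$. At each time $t$, upon arrival of $d_t$: while $p\cdot\big|\{i: t-\tau+1\le i\le t,\ d_i>x_i\}\big|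 > z$, do: increase $r_t$ by $1$; increase $x_i$ by $1$ for $i=t,\dots,t+\tau-1$; increase $x_i$ by $1$ for $i=t-\tau+1,\dots,t-1$ (a "phantom" reservation). After the loop, set $o_t=\max\{d_t-x_t,0\}$. $A_\beta$ denotes $A_z$ with $z=\beta=1/(1-\alpha)$. *)

theory Defs
  imports Main Complex_Main
begin

(* Time slots are t = 1,2,...,T (type nat); indices <= 0 carry zero demand and
   zero reservations, so they are simply omitted. *)

definition win :: "nat \<Rightarrow> nat \<Rightarrow> nat set" where
  "win tau t = {i. 1 \<le> i \<and> i \<le> t \<and> t < i + tau}"

definition feasible :: "nat \<Rightarrow> nat \<Rightarrow> (nat \<Rightarrow> nat) \<Rightarrow> (nat \<Rightarrow> nat) \<Rightarrow> (nat \<Rightarrow> nat) \<Rightarrow> bool" where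
  "feasible T tau d od r \<longleftrightarrow>
     (\<forall>t. r t \<noteq> 0 \<longrightarrow> 1 \<le> t \<and> t \<le> T) \<and>
     (\<forall>t\<in>{1..T}. d t \<le> od t + (\<Sum>i\<in>win tau t. r i))"

definition cost :: "real \<Rightarrow> real \<Rightarrow> nat \<Rightarrow> (nat \<Rightarrow> nat) \<Rightarrow> (nat \<Rightarrow> nat) \<Rightarrow> (nat \<Rightarrow> nat) \<Rightarrow> real" where
  "cost p \<alpha> T d od r = (\<Sum>t=1..T. real (od t) * p + real (r t) + \<alpha> * p * (real (d t) - real (od t)))"

(* The while loop at time t increases all x_i with
   t - tau + 1 <= i <= t + tau - 1 by one per iteration (real + phantom
   reservation), and stops as soon as p * |{i in window : d_i > x_i}| <= z.
   Hence the number of iterations is the least k with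
   p * |{i in window : d_i > x_i + k}| <= z. *)
definition loop_count :: "real \<Rightarrow> real \<Rightarrow> nat \<Rightarrow> (nat \<Rightarrow> nat) \<Rightarrow> (nat \<Rightarrow> nat) \<Rightarrow> nat \<Rightarrow> nat" where
  "loop_count p z tau d x t =
     (LEAST k::nat. p * real (card {i\<in>win tau t. x i + k < d i}) \<le> z)"

definition bump :: "nat \<Rightarrow> (nat \<Rightarrow> nat) \<Rightarrow> nat \<Rightarrow> nat \<Rightarrow> (nat \<Rightarrow> nat)" where
  "bump tau x t k = (\<lambda>i. if t < i + tau \<and> i < t + tau then x i + k else x i)"

fun alg_x :: "real \<Rightarrow> real \<Rightarrow> nat \<Rightarrow> (nat \<Rightarrow> nat) \<Rightarrow> nat \<Rightarrow> (nat \<Rightarrow> nat)" where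
  "alg_x p z tau d 0 = (\<lambda>_. 0)"
| "alg_x p z tau d (Suc t) =
     bump tau (alg_x p z tau d t) (Suc t) (loop_count p z tau d (alg_x p z tau d t) (Suc t))"

definition alg_r :: "real \<Rightarrow> real \<Rightarrow> nat \<Rightarrow> (nat \<Rightarrow> nat) \<Rightarrow> nat \<Rightarrow> nat" where
  "alg_r p z tau d t = loop_count p z tau d (alg_x p z tau d (t - 1)) t"

definition alg_n :: "real \<Rightarrow> real \<Rightarrow> nat \<Rightarrow> (nat \<Rightarrow> nat) \<Rightarrow> nat \<Rightarrow> nat" where
  "alg_n p z tau d T = (\<Sum>t=1..T. alg_r p z tau d t)"

end

theory Submission
  imports Defs
begin

text \<open>An optimal offline solution never leaves more than \<open>\<beta>/p\<close> uncovered slots in a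
window: otherwise one extra reservation at the start of the window would save at least
\<open>p(1-\<alpha>)\<close> per uncovered slot and cost only \<open>1\<close>.  Since \<open>A\<^sub>\<beta>\<close> reserves only while more
than \<open>\<beta>/p\<close> slots of the current window are uncovered by its (real and phantom)
reservations, its cumulative number of reservations can never overtake that of such a
solution: at the first time it did, every slot the algorithm still saw uncovered would be
uncovered by the offline solution as well.\<close>

definition active :: "nat \<Rightarrow> (nat \<Rightarrow> nat) \<Rightarrow> nat \<Rightarrow> nat" where
  "active tau r i = (\<Sum>j\<in>win tau i. r j)"

definition residual :: "nat \<Rightarrow> (nat \<Rightarrow> nat) \<Rightarrow> (nat \<Rightarrow> nat) \<Rightarrow> nat \<Rightarrow> nat" where
  "residual tau d r i = d i - active tau r i"

definition uncovered :: "nat \<Rightarrow> (nat \<Rightarrow> nat) \<Rightarrow> (nat \<Rightarrow> nat) \<Rightarrow> nat \<Rightarrow> nat set" where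
  "uncovered tau d r t = {i \<in> win tau t. active tau r i < d i}"

lemma finite_win [simp]: "finite (win tau t)"
  unfolding win_def by (rule finite_subset[of _ "{..t}"]) auto

lemma cost_eq:
  "cost p \<alpha> T d od r = p * (1 - \<alpha>) * (\<Sum>t=1..T. real (od t)) + (\<Sum>t=1..T. real (r t))
     + \<alpha> * p * (\<Sum>t=1..T. real (d t))"
proof -
  have "cost p \<alpha> T d od r = (\<Sum>t=1..T. p * (1 - \<alpha>) * real (od t) + real (r t) + \<alpha> * p * real (d t))"
    unfolding cost_def by (rule sum.cong) (auto simp: algebra_simps)
  then show ?thesis
    by (simp add: sum.distrib sum_distrib_left)
qed

lemma cost_mono_ondemand:
  assumes "0 \<le> p" "\<alpha> \<le> 1" "\<And>t. t \<in> {1..T} \<Longrightarrow> od' t \<le> od t"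
  shows "cost p \<alpha> T d od' r \<le> cost p \<alpha> T d od r"
proof -
  have "(\<Sum>t=1..T. real (od' t)) \<le> (\<Sum>t=1..T. real (od t))"
    by (rule sum_mono) (use assms(3) in auto)
  then show ?thesis
    unfolding cost_eq using assms(1,2) by (simp add: mult_left_mono)
qed

lemma feasible_residual:
  assumes "\<forall>t. r t \<noteq> 0 \<longrightarrow> 1 \<le> t \<and> t \<le> T"
  shows "feasible T tau d (residual tau d r) r"
  using assms unfolding feasible_def residual_def active_def by auto

lemma residual_le_ondemand:
  assumes "feasible T tau d od r" "t \<in> {1..T}"
  shows "residual tau d r t \<le> od t"
  using assms unfolding feasible_def residual_def active_def by force

lemma active_add_reservation:
  "active tau (\<lambda>j. r j + (if j = a then 1 else 0)) i = active tau r i + (if a \<in> win tau i then 1 else 0)"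
  unfolding active_def by (simp add: sum.distrib)

lemma cost_add_reservation:
  fixes p \<alpha> :: real and a T :: nat and r d :: "nat \<Rightarrow> nat" and tau :: nat
  assumes "0 \<le> p" "\<alpha> \<le> 1" "a \<in> {1..T}"
  defines "r' \<equiv> \<lambda>j. r j + (if j = a then 1 else 0)"
    and "B \<equiv> {i \<in> {1..T}. a \<in> win tau i \<and> active tau r i < d i}"
  shows "cost p \<alpha> T d (residual tau d r') r' + p * (1 - \<alpha>) * real (card B)
           \<le> cost p \<alpha> T d (residual tau d r) r + 1"
proof -
  have "residual tau d r' i + (if i \<in> B then 1 else 0) \<le> residual tau d r i" if "i \<in> {1..T}" for i
    using that unfolding residual_def r'_def active_add_reservation B_def by auto
  then have "(\<Sum>i=1..T. residual tau d r' i + (if i \<in> B then 1 else 0)) \<le> (\<Sum>i=1..T. residual tau d r i)"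
    by (rule sum_mono)
  moreover have "(\<Sum>i=1..T. if i \<in> B then 1 else 0 :: nat) = card B"
    by (auto simp: sum.If_cases B_def intro!: arg_cong[where f = card])
  ultimately have "(\<Sum>i=1..T. real (residual tau d r' i)) + real (card B) \<le> (\<Sum>i=1..T. real (residual tau d r i))"
    by (simp only: sum.distrib flip: of_nat_sum of_nat_add of_nat_le_iff)
  then have "p * (1 - \<alpha>) * ((\<Sum>i=1..T. real (residual tau d r' i)) + real (card B))
              \<le> p * (1 - \<alpha>) * (\<Sum>i=1..T. real (residual tau d r i))"
    using assms(1,2) by (simp add: mult_left_mono)
  moreover have "(\<Sum>i=1..T. real (r' i)) = (\<Sum>i=1..T. real (r i)) + 1"
    using assms(3) by (simp add: r'_def sum.distrib flip: of_nat_sum)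
  ultimately show ?thesis
    unfolding cost_eq by (simp add: distrib_left)
qed

lemma win_start_in_win:
  assumes "i \<in> win tau t"
  shows "max 1 (t + 1 - tau) \<in> win tau i"
  using assms unfolding win_def by auto

lemma optimal_uncovered_bound:
  assumes "0 < p" "\<alpha> < 1" "1 \<le> tau" "t \<in> {1..T}"
    and feas: "feasible T tau d od r"
    and opt: "\<forall>od' r'. feasible T tau d od' r' \<longrightarrow> cost p \<alpha> T d od r \<le> cost p \<alpha> T d od' r'"
  shows "p * real (card (uncovered tau d r t)) \<le> 1 / (1 - \<alpha>)"
proof -
  define a where "a = max 1 (t + 1 - tau)"
  define r' where "r' = (\<lambda>j. r j + (if j = a then (1::nat) else 0))"
  define B where "B = {i \<in> {1..T}. a \<in> win tau i \<and> active tau r i < d i}"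
  have a: "a \<in> {1..T}"
    using assms(3,4) by (auto simp: a_def)
  have "feasible T tau d (residual tau d r') r'"
    by (rule feasible_residual) (use feas a in \<open>auto simp: feasible_def r'_def\<close>)
  then have "cost p \<alpha> T d od r \<le> cost p \<alpha> T d (residual tau d r') r'"
    using opt by blast
  moreover have "cost p \<alpha> T d (residual tau d r') r' + p * (1 - \<alpha>) * real (card B)
                   \<le> cost p \<alpha> T d (residual tau d r) r + 1"
    unfolding r'_def B_def by (rule cost_add_reservation) (use assms(1,2) a in auto)
  moreover have "cost p \<alpha> T d (residual tau d r) r \<le> cost p \<alpha> T d od r"
    by (rule cost_mono_ondemand) (use assms(1,2) residual_le_ondemand[OF feas] in auto)
  moreover have "card (uncovered tau d r t) \<le> card B"
    by (rule card_mono) (use assms(4) win_start_in_win in \<open>auto simp: B_def uncovered_def a_def win_def\<close>)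
  then have "p * (1 - \<alpha>) * real (card (uncovered tau d r t)) \<le> p * (1 - \<alpha>) * real (card B)"
    using assms(1,2) by (intro mult_left_mono) auto
  ultimately have "p * real (card (uncovered tau d r t)) * (1 - \<alpha>) \<le> 1"
    by (simp add: mult_ac)
  then show ?thesis
    using assms(2) by (simp add: pos_le_divide_eq)
qed

lemma alg_x_eq:
  "alg_x p z tau d t i = (\<Sum>j=1..t. if j < i + tau \<and> i < j + tau then alg_r p z tau d j else 0)"
  by (induction t) (auto simp: bump_def alg_r_def)

lemma sum_split_at_window:
  fixes f :: "nat \<Rightarrow> 'a::comm_monoid_add"
  assumes "i \<le> t"
  shows "(\<Sum>j=1..t. f j) = (\<Sum>j=1..i-tau. f j) + (\<Sum>j=1..t. if i < j + tau then f j else 0)"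
proof -
  have "(\<Sum>j=1..t. f j) = (\<Sum>j=1..t. if i < j + tau then 0 else f j) + (\<Sum>j=1..t. if i < j + tau then f j else 0)"
    by (simp flip: sum.distrib) (rule sum.cong, auto)
  also have "(\<Sum>j=1..t. if i < j + tau then 0 else f j) = (\<Sum>j=1..i-tau. if i < j + tau then 0 else f j)"
    by (rule sum.mono_neutral_right) (use assms in auto)
  also have "\<dots> = (\<Sum>j=1..i-tau. f j)"
    by (rule sum.cong) auto
  finally show ?thesis .
qed

lemma alg_prefix_split:
  assumes "i \<in> win tau (Suc s)"
  shows "(\<Sum>j=1..Suc s. alg_r p z tau d j)
           = (\<Sum>j=1..i-tau. alg_r p z tau d j) + alg_x p z tau d s i + alg_r p z tau d (Suc s)"
proof -
  have "alg_x p z tau d s i = (\<Sum>j=1..s. if i < j + tau then alg_r p z tau d j else 0)"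
    unfolding alg_x_eq by (rule sum.cong) (use assms in \<open>auto simp: win_def\<close>)
  then show ?thesis
    using sum_split_at_window[of i "Suc s" "alg_r p z tau d" tau] assms by (simp add: win_def)
qed

lemma prefix_active_le:
  fixes r :: "nat \<Rightarrow> nat"
  assumes "i \<le> t"
  shows "(\<Sum>j=1..i-tau. r j) + active tau r i \<le> (\<Sum>j=1..t. r j)"
proof -
  have "active tau r i = (\<Sum>j\<in>{j \<in> {1..t}. i < j + tau} \<inter> {..i}. r j)"
    unfolding active_def by (rule sum.cong) (use assms in \<open>auto simp: win_def\<close>)
  also have "\<dots> \<le> (\<Sum>j\<in>{j \<in> {1..t}. i < j + tau}. r j)"
    by (rule sum_mono2) auto
  also have "\<dots> = (\<Sum>j=1..t. if i < j + tau then r j else 0)"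
    by (rule sum.inter_filter) simp
  finally show ?thesis
    using sum_split_at_window[of i t r tau] assms by simp
qed

lemma loop_count_minimal:
  assumes "0 < loop_count p z tau d x t"
  shows "z < p * real (card {i \<in> win tau t. x i + (loop_count p z tau d x t - 1) < d i})"
proof (rule ccontr)
  assume "\<not> ?thesis"
  then have "loop_count p z tau d x t \<le> loop_count p z tau d x t - 1"
    unfolding loop_count_def by (intro Least_le) simp
  with assms show False by simp
qed

text \<open>In the induction step, a slot \<open>i\<close> still short for the algorithm is short for \<open>r\<close> too,
because up to time \<open>i - \<tau>\<close> the algorithm has not overtaken \<open>r\<close> (induction hypothesis).\<close>

lemma alg_prefix_le:
  fixes r :: "nat \<Rightarrow> nat"
  assumes "0 \<le> p"
    and bound: "\<And>t. t \<in> {1..T} \<Longrightarrow> p * real (card (uncovered tau d r t)) \<le> z"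
    and "t \<le> T"
  shows "(\<Sum>j=1..t. alg_r p z tau d j) \<le> (\<Sum>j=1..t. r j)"
  using \<open>t \<le> T\<close>
proof (induction t rule: less_induct)
  case (less t)
  show ?case
  proof (cases t)
    case 0
    then show ?thesis by simp
  next
    case (Suc s)
    define k where "k = alg_r p z tau d t"
    define x where "x = alg_x p z tau d s"
    have k: "k = loop_count p z tau d x t"
      by (simp add: k_def alg_r_def x_def Suc)
    show ?thesis
    proof (rule ccontr)
      assume overtake: "\<not> ?thesis"
      have "(\<Sum>j=1..s. alg_r p z tau d j) \<le> (\<Sum>j=1..s. r j)"
        using less Suc by simp
      with overtake have "0 < k"
        by (auto simp: k_def Suc)
      have "{i \<in> win tau t. x i + (k - 1) < d i} \<subseteq> uncovered tau d r t"
      proof safe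
        fix i assume i: "i \<in> win tau t" and short: "x i + (k - 1) < d i"
        have "(\<Sum>j=1..i-tau. alg_r p z tau d j) \<le> (\<Sum>j=1..i-tau. r j)"
          using i less by (intro less.IH) (auto simp: win_def)
        moreover have "(\<Sum>j=1..i-tau. r j) + active tau r i \<le> (\<Sum>j=1..t. r j)"
          using i by (intro prefix_active_le) (simp add: win_def)
        ultimately have "active tau r i < x i + k"
          using overtake alg_prefix_split[of i tau s p z d] i by (simp add: Suc x_def k_def)
        with short \<open>0 < k\<close> show "i \<in> uncovered tau d r t"
          using i by (simp add: uncovered_def)
      qed
      then have "p * real (card {i \<in> win tau t. x i + (k - 1) < d i}) \<le> p * real (card (uncovered tau d r t))"
        using \<open>0 \<le> p\<close> by (intro mult_left_mono) (auto intro: card_mono simp: uncovered_def)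
      also have "\<dots> \<le> z"
        using bound less Suc by simp
      finally show False
        using loop_count_minimal[of p z tau d x t] \<open>0 < k\<close> by (simp add: k)
    qed
  qed
qed

theorem lemma2:
  fixes p \<alpha> :: real and tau T :: nat and d od r :: "nat \<Rightarrow> nat"
  assumes "p > 0" and "0 \<le> \<alpha>" and "\<alpha> < 1" and "tau \<ge> 1"
    and "feasible T tau d od r"
    and "\<forall>od' r'. feasible T tau d od' r' \<longrightarrow> cost p \<alpha> T d od r \<le> cost p \<alpha> T d od' r'"
  shows "alg_n p (1 / (1 - \<alpha>)) tau d T \<le> (\<Sum>t=1..T. r t)"
proof -
  have "p * real (card (uncovered tau d r t)) \<le> 1 / (1 - \<alpha>)" if "t \<in> {1..T}" for t
    using optimal_uncovered_bound assms that by blast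
  then show ?thesis
    unfolding alg_n_def using alg_prefix_le[of p T tau d r] \<open>p > 0\<close> by simp
qed

end
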